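(* Let $M$ be a partial commutative monoid and let $\mathrm{cl}$ be a strong closure operator on $\mathcal P(M)$ such that the collection $\mathcal C=\{X\subseteq M\mid \mathrm{cl}(X)=X\}$ of closed sets, ordered by inclusion, has a Heyting implication. Then $\mathcal C$ is a BI algebra with $\bot=\mathrm{cl}(\emptyset)$, $\top=M$, $X\wedge Y=X\cap Y$, $X\vee Y=\mathrm{cl}(X\cup Y)$, the given Heyting implication, $\mathsf{emp}=\mathrm{cl}(\mathbf 0)$, $X\ast Y=\mathrm{cl}(X\bullet Y)$ and $X-\!\!\ast\,Y=\mathrm{cl}(X-\!\!\bullet\,Y)$.
   Context: A partial commutative monoid $(M,\cdot,e)$ has a partial commutative, associative operation $\cdot$ with unit $e$; write $x\cdot y=\bot$ if undefined. On $\mathcal P(M)$ define $\mathbf 0=\{e\}$, $X\bullet Y=\{x\cdot y\mid x\in X,y\in Y,x\cdot y\ne\bot\}$, $X-\!\!\bullet\,Y=\{z\mid \forall x\in X.\ z\cdot x\ne\bot\Rightarrow z\cdot x\in Y\}$. A closure operator on $\mathcal P(M)$ is a map $\mathrm{cl}$ with $X\subseteq\mathrm{cl}(X)$, $X\subseteq Y\Rightarrow\mathrm{cl}(X)\subseteq\mathrm{cl}(Y)$, and $\mathrm{cl}(\mathrm{cl}(X))=\mathrm{cl}(X)$. It is strong if $\mathrm{cl}(X)\bullet Y\subseteq\mathrm{cl}(X\bullet Y)$ for all $X,Y$. A BI algebra is a tuple $(B,\bot,\top,\wedge,\vee,\to,\mathsf{emp},\ast,-\!\!\ast)$ where $(B,\bot,\top,\wedge,\vee,\to)$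 is a bounded Heyting algebra, $\ast$ is monotone, commutative, associative with unit $\mathsf{emp}$, and $a\ast b\le c\iff a\le b-\!\!\ast\,c$. *)

theory Defs
  imports Main
begin

text \<open>A partial commutative monoid on the whole type 'a: the partial operation is
  a function into 'a option (None = undefined), with unit e.  Associativity is
  Kleene equality of both bracketings.\<close>

definition pcm :: "('a \<Rightarrow> 'a \<Rightarrow> 'a option) \<Rightarrow> 'a \<Rightarrow> bool" where
  "pcm op e \<longleftrightarrow>
     (\<forall>x y. op x y = op y x) \<and>
     (\<forall>x y z. Option.bind (op x y) (\<lambda>w. op w z) = Option.bind (op y z) (\<lambda>w. op x w)) \<and>
     (\<forall>x. op e x = Some x)"

definition pzero :: "'a \<Rightarrow> 'a set" where
  "pzero e = {e}"

definition pstar :: "('a \<Rightarrow> 'a \<Rightarrow> 'a option) \<Rightarrow> 'a set \<Rightarrow> 'a set \<Rightarrow> 'a set" where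
  "pstar op X Y = {w. \<exists>x\<in>X. \<exists>y\<in>Y. op x y = Some w}"

definition pwand :: "('a \<Rightarrow> 'a \<Rightarrow> 'a option) \<Rightarrow> 'a set \<Rightarrow> 'a set \<Rightarrow> 'a set" where
  "pwand op X Y = {z. \<forall>x\<in>X. \<forall>w. op z x = Some w \<longrightarrow> w \<in> Y}"

definition closure_op :: "('a set \<Rightarrow> 'a set) \<Rightarrow> bool" where
  "closure_op cl \<longleftrightarrow>
     (\<forall>X. X \<subseteq> cl X) \<and> (\<forall>X Y. X \<subseteq> Y \<longrightarrow> cl X \<subseteq> cl Y) \<and> (\<forall>X. cl (cl X) = cl X)"

definition strong_closure_op :: "('a \<Rightarrow> 'a \<Rightarrow> 'a option) \<Rightarrow> ('a set \<Rightarrow> 'a set) \<Rightarrow> bool" where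
  "strong_closure_op op cl \<longleftrightarrow>
     closure_op cl \<and> (\<forall>X Y. pstar op (cl X) Y \<subseteq> cl (pstar op X Y))"

definition closed_sets :: "('a set \<Rightarrow> 'a set) \<Rightarrow> 'a set set" where
  "closed_sets cl = {X. cl X = X}"

definition is_heyting_imp ::
  "'b set \<Rightarrow> ('b \<Rightarrow> 'b \<Rightarrow> bool) \<Rightarrow> ('b \<Rightarrow> 'b \<Rightarrow> 'b) \<Rightarrow> ('b \<Rightarrow> 'b \<Rightarrow> 'b) \<Rightarrow> bool" where
  "is_heyting_imp B le meet imp \<longleftrightarrow>
     (\<forall>a\<in>B. \<forall>b\<in>B. imp a b \<in> B) \<and>
     (\<forall>a\<in>B. \<forall>b\<in>B. \<forall>c\<in>B. le (meet a b) c \<longleftrightarrow> le a (imp b c))"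

definition bounded_lattice_on ::
  "'b set \<Rightarrow> ('b \<Rightarrow> 'b \<Rightarrow> bool) \<Rightarrow> 'b \<Rightarrow> 'b \<Rightarrow> ('b \<Rightarrow> 'b \<Rightarrow> 'b) \<Rightarrow> ('b \<Rightarrow> 'b \<Rightarrow> 'b) \<Rightarrow> bool" where
  "bounded_lattice_on B le bt tp meet join \<longleftrightarrow>
     (\<forall>a\<in>B. le a a) \<and>
     (\<forall>a\<in>B. \<forall>b\<in>B. le a b \<and> le b a \<longrightarrow> a = b) \<and>
     (\<forall>a\<in>B. \<forall>b\<in>B. \<forall>c\<in>B. le a b \<and> le b c \<longrightarrow> le a c) \<and>
     bt \<in> B \<and> tp \<in> B \<and> (\<forall>a\<in>B. le bt a \<and> le a tp) \<and>
     (\<forall>a\<in>B. \<forall>b\<in>B. meet a b \<in> B \<and> join a b \<in> B) \<and>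
     (\<forall>a\<in>B. \<forall>b\<in>B. le (meet a b) a \<and> le (meet a b) b \<and>
        (\<forall>c\<in>B. le c a \<and> le c b \<longrightarrow> le c (meet a b))) \<and>
     (\<forall>a\<in>B. \<forall>b\<in>B. le a (join a b) \<and> le b (join a b) \<and>
        (\<forall>c\<in>B. le a c \<and> le b c \<longrightarrow> le (join a b) c))"

definition bi_algebra ::
  "'b set \<Rightarrow> ('b \<Rightarrow> 'b \<Rightarrow> bool) \<Rightarrow> 'b \<Rightarrow> 'b \<Rightarrow> ('b \<Rightarrow> 'b \<Rightarrow> 'b) \<Rightarrow> ('b \<Rightarrow> 'b \<Rightarrow> 'b)
    \<Rightarrow> ('b \<Rightarrow> 'b \<Rightarrow> 'b) \<Rightarrow> 'b \<Rightarrow> ('b \<Rightarrow> 'b \<Rightarrow> 'b) \<Rightarrow> ('b \<Rightarrow> 'b \<Rightarrow> 'b) \<Rightarrow> bool" where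
  "bi_algebra B le bt tp meet join imp emp star wand \<longleftrightarrow>
     bounded_lattice_on B le bt tp meet join \<and>
     is_heyting_imp B le meet imp \<and>
     emp \<in> B \<and>
     (\<forall>a\<in>B. \<forall>b\<in>B. star a b \<in> B \<and> wand a b \<in> B) \<and>
     (\<forall>a\<in>B. \<forall>a'\<in>B. \<forall>b\<in>B. \<forall>b'\<in>B. le a a' \<and> le b b' \<longrightarrow> le (star a b) (star a' b')) \<and>
     (\<forall>a\<in>B. \<forall>b\<in>B. star a b = star b a) \<and>
     (\<forall>a\<in>B. \<forall>b\<in>B. \<forall>c\<in>B. star (star a b) c = star a (star b c)) \<and>
     (\<forall>a\<in>B. star a emp = a) \<and>
     (\<forall>a\<in>B. \<forall>b\<in>B. \<forall>c\<in>B. le (star a b) c \<longleftrightarrow> le a (wand b c))"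

end

theory Submission
  imports Defs
begin

text \<open>Strength makes the closure invisible inside a product: cl (cl X \<bullet> Y) and
  cl (X \<bullet> Y) are both the least closed set containing X \<bullet> Y, so the monoid laws of \<bullet>
  on the powerset pass to cl (X \<bullet> Y) on closed sets.  Moreover Y -\<bullet> Z is already closed
  when Z is, since cl (Y -\<bullet> Z) \<bullet> Y \<subseteq> cl ((Y -\<bullet> Z) \<bullet> Y) \<subseteq> Z; so the residuation of \<bullet> by -\<bullet>
  passes to closed sets as well.\<close>

lemma pstar_commute:
  assumes "pcm op e"
  shows "pstar op X Y = pstar op Y X"
proof -
  have "\<And>x y. op x y = op y x" using assms unfolding pcm_def by blast
  then show ?thesis unfolding pstar_def by (intro set_eqI) (simp, metis)
qed

lemma pstar_assoc:
  assumes "pcm op e"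
  shows "pstar op (pstar op X Y) Z = pstar op X (pstar op Y Z)"
proof -
  have assoc: "\<And>x y z. Option.bind (op x y) (\<lambda>w. op w z) = Option.bind (op y z) (\<lambda>w. op x w)"
    using assms unfolding pcm_def by blast
  have "(\<exists>u. op x y = Some u \<and> op u z = Some w) \<longleftrightarrow> (\<exists>v. op y z = Some v \<and> op x v = Some w)"
    for x y z w
    using assoc[of x y z] by (cases "op x y"; cases "op y z") auto
  then show ?thesis unfolding pstar_def by blast
qed

lemma pstar_pzero_right:
  assumes "pcm op e"
  shows "pstar op X (pzero e) = X"
proof -
  have "\<And>x. op x e = Some x" using assms unfolding pcm_def by metis
  then show ?thesis unfolding pstar_def pzero_def by auto
qed

lemma pstar_mono: "X \<subseteq> X' \<Longrightarrow> Y \<subseteq> Y' \<Longrightarrow> pstar op X Y \<subseteq> pstar op X' Y'"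
  unfolding pstar_def by blast

lemma pstar_subset_iff_subset_pwand: "pstar op X Y \<subseteq> Z \<longleftrightarrow> X \<subseteq> pwand op Y Z"
  unfolding pstar_def pwand_def by blast

locale closure_operator =
  fixes cl :: "'a set \<Rightarrow> 'a set"
  assumes closure_op: "closure_op cl"
begin

lemma closure_ext: "X \<subseteq> cl X"
  using closure_op unfolding closure_op_def by blast

lemma closure_mono: "X \<subseteq> Y \<Longrightarrow> cl X \<subseteq> cl Y"
  using closure_op unfolding closure_op_def by blast

lemma closure_idem: "cl (cl X) = cl X"
  using closure_op unfolding closure_op_def by blast

lemma closure_in_closed_sets: "cl X \<in> closed_sets cl"
  unfolding closed_sets_def by (simp add: closure_idem)

lemma closure_subset_closed_iff:
  assumes "Z \<in> closed_sets cl"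
  shows "cl X \<subseteq> Z \<longleftrightarrow> X \<subseteq> Z"
proof
  assume "X \<subseteq> Z"
  then have "cl X \<subseteq> cl Z" by (rule closure_mono)
  with assms show "cl X \<subseteq> Z" unfolding closed_sets_def by simp
qed (use closure_ext in blast)

lemma closed_sets_UNIV: "UNIV \<in> closed_sets cl"
  unfolding closed_sets_def using closure_ext by blast

lemma closed_sets_Int:
  assumes "X \<in> closed_sets cl" and "Y \<in> closed_sets cl"
  shows "X \<inter> Y \<in> closed_sets cl"
proof -
  have "cl (X \<inter> Y) \<subseteq> X \<inter> Y"
    using assms by (simp add: closure_subset_closed_iff)
  then show ?thesis
    unfolding closed_sets_def using closure_ext by blast
qed

lemma bounded_lattice_closed_sets:
  "bounded_lattice_on (closed_sets cl) (\<subseteq>) (cl {}) UNIV (\<inter>) (\<lambda>X Y. cl (X \<union> Y))"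
proof -
  have "X \<subseteq> cl (X \<union> Y) \<and> Y \<subseteq> cl (X \<union> Y)" for X Y
    using closure_ext by blast
  then show ?thesis
    unfolding bounded_lattice_on_def
    using closure_in_closed_sets closed_sets_UNIV closed_sets_Int closure_subset_closed_iff
    by auto
qed

end

locale strong_closure = closure_operator cl
  for op :: "'a \<Rightarrow> 'a \<Rightarrow> 'a option" and e :: 'a and cl :: "'a set \<Rightarrow> 'a set" +
  assumes pcm: "pcm op e"
    and strong: "strong_closure_op op cl"
begin

lemma pstar_closure_left_subset: "pstar op (cl X) Y \<subseteq> cl (pstar op X Y)"
  using strong unfolding strong_closure_op_def by blast

lemma closure_pstar_closure_left: "cl (pstar op (cl X) Y) = cl (pstar op X Y)"
proof (rule subset_antisym)
  show "cl (pstar op (cl X) Y) \<subseteq> cl (pstar op X Y)"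
    using pstar_closure_left_subset by (simp add: closure_subset_closed_iff closure_in_closed_sets)
  show "cl (pstar op X Y) \<subseteq> cl (pstar op (cl X) Y)"
    by (intro closure_mono pstar_mono closure_ext order_refl)
qed

lemma closure_pstar_closure_right: "cl (pstar op X (cl Y)) = cl (pstar op X Y)"
  using closure_pstar_closure_left pstar_commute[OF pcm] by metis

lemma closure_pstar_assoc:
  "cl (pstar op (cl (pstar op X Y)) Z) = cl (pstar op X (cl (pstar op Y Z)))"
  by (simp add: closure_pstar_closure_left closure_pstar_closure_right pstar_assoc[OF pcm])

lemma closure_pstar_pzero_right: "X \<in> closed_sets cl \<Longrightarrow> cl (pstar op X (cl (pzero e))) = X"
  by (simp add: closure_pstar_closure_right pstar_pzero_right[OF pcm] closed_sets_def)

lemma pwand_in_closed_sets: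
  assumes "Z \<in> closed_sets cl"
  shows "pwand op Y Z \<in> closed_sets cl"
proof -
  have "pstar op (cl (pwand op Y Z)) Y \<subseteq> cl (pstar op (pwand op Y Z) Y)"
    by (rule pstar_closure_left_subset)
  also have "\<dots> \<subseteq> Z"
    using assms by (simp add: closure_subset_closed_iff pstar_subset_iff_subset_pwand)
  finally have "cl (pwand op Y Z) \<subseteq> pwand op Y Z"
    by (simp add: pstar_subset_iff_subset_pwand)
  then show ?thesis
    unfolding closed_sets_def using closure_ext by blast
qed

lemma bi_algebra_closed_sets:
  assumes "is_heyting_imp (closed_sets cl) (\<subseteq>) (\<inter>) imp"
  shows "bi_algebra (closed_sets cl) (\<subseteq>) (cl {}) UNIV (\<inter>) (\<lambda>X Y. cl (X \<union> Y)) imp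
           (cl (pzero e)) (\<lambda>X Y. cl (pstar op X Y)) (\<lambda>X Y. cl (pwand op X Y))"
proof -
  have residuation: "cl (pstar op X Y) \<subseteq> Z \<longleftrightarrow> X \<subseteq> cl (pwand op Y Z)"
    if "Z \<in> closed_sets cl" for X Y Z
    using that pwand_in_closed_sets[OF that, of Y]
    by (simp add: closure_subset_closed_iff pstar_subset_iff_subset_pwand closed_sets_def)
  show ?thesis
    unfolding bi_algebra_def
    using bounded_lattice_closed_sets assms closure_in_closed_sets closure_mono[OF pstar_mono]
      pstar_commute[OF pcm] closure_pstar_assoc closure_pstar_pzero_right residuation
    by auto
qed

end

theorem theorem5p8:
  fixes op :: "'a \<Rightarrow> 'a \<Rightarrow> 'a option" and e :: 'a
    and cl :: "'a set \<Rightarrow> 'a set" and imp :: "'a set \<Rightarrow> 'a set \<Rightarrow> 'a set"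
  assumes "pcm op e"
    and "strong_closure_op op cl"
    and "is_heyting_imp (closed_sets cl) (\<subseteq>) (\<inter>) imp"
  shows "bi_algebra (closed_sets cl) (\<subseteq>) (cl {}) UNIV (\<inter>) (\<lambda>X Y. cl (X \<union> Y)) imp
           (cl (pzero e)) (\<lambda>X Y. cl (pstar op X Y)) (\<lambda>X Y. cl (pwand op X Y))"
proof -
  interpret strong_closure op e cl
    using assms(1,2) by unfold_locales (auto simp: strong_closure_op_def)
  show ?thesis using assms(3) by (rule bi_algebra_closed_sets)
qed

end
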